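(* Let $0<c_1\le c_2$ be constants, let $n$ be sufficiently large, let $t\in[1,n^{0.1}]$, and let $H$ be an undirected graph on $n$ vertices in which every vertex has degree between $c_1t$ and $c_2t$ and which has no cycle of length at most $8$. Then any two distinct maximal cliques of $H^2$ have at most one vertex in common.
   Context: $H^2$ (the square of $H$) is the graph on the vertex set of $H$ in which $u\neq v$ are adjacent if and only if there is a path of length exactly $2$ between $u$ and $v$ in $H$. *)

theory Defs
  imports Complex_Main
begin

definition simple_graph :: "'a set \<Rightarrow> ('a \<Rightarrow> 'a \<Rightarrow> bool) \<Rightarrow> bool" where
  "simple_graph V E \<longleftrightarrow> finite V \<and> (\<forall>u v. E u v \<longrightarrow> u \<in> V \<and> v \<in> V)
     \<and> (\<forall>u v. E u v \<longrightarrow> E v u) \<and> (\<forall>v. \<not> E v v)"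

definition degree :: "'a set \<Rightarrow> ('a \<Rightarrow> 'a \<Rightarrow> bool) \<Rightarrow> 'a \<Rightarrow> nat" where
  "degree V E v = card {u \<in> V. E v u}"

definition has_cycle_of_length :: "'a set \<Rightarrow> ('a \<Rightarrow> 'a \<Rightarrow> bool) \<Rightarrow> nat \<Rightarrow> bool" where
  "has_cycle_of_length V E k \<longleftrightarrow> k \<ge> 3 \<and> (\<exists>c :: nat \<Rightarrow> 'a.
      (\<forall>i<k. c i \<in> V) \<and> inj_on c {..<k} \<and> (\<forall>i<k. E (c i) (c (Suc i mod k))))"

definition square_adj :: "'a set \<Rightarrow> ('a \<Rightarrow> 'a \<Rightarrow> bool) \<Rightarrow> 'a \<Rightarrow> 'a \<Rightarrow> bool" where
  "square_adj V E u v \<longleftrightarrow> u \<in> V \<and> v \<in> V \<and> u \<noteq> v \<and> (\<exists>w\<in>V. E u w \<and> E w v)"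

definition is_clique :: "'a set \<Rightarrow> ('a \<Rightarrow> 'a \<Rightarrow> bool) \<Rightarrow> 'a set \<Rightarrow> bool" where
  "is_clique V A K \<longleftrightarrow> K \<subseteq> V \<and> (\<forall>u\<in>K. \<forall>v\<in>K. u \<noteq> v \<longrightarrow> A u v)"

definition is_maximal_clique :: "'a set \<Rightarrow> ('a \<Rightarrow> 'a \<Rightarrow> bool) \<Rightarrow> 'a set \<Rightarrow> bool" where
  "is_maximal_clique V A K \<longleftrightarrow> is_clique V A K \<and> (\<forall>K'. is_clique V A K' \<and> K \<subseteq> K' \<longrightarrow> K' = K)"

end

theory Submission
  imports Defs
begin

text \<open>If two distinct vertices u, v lie in a common clique K of H^2,
  they have a common neighbour x, and it is unique, since a second one would close a 4-cycle.
  Every further w \<in> K is joined by paths of length 2 to u and to v; unless w is adjacent to x,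
  these paths either produce a second common neighbour of u and v or close a 6-cycle
  u x v b w a (the triangle-freeness making the six vertices distinct). Hence K lies in
  the neighbourhood N(x), which is itself a clique of H^2, so N(x) is the only maximal
  clique containing u and v.\<close>

lemma simple_graphD:
  assumes "simple_graph V E"
  shows simple_graph_sym: "E u v \<Longrightarrow> E v u"
    and simple_graph_irrefl: "\<not> E v v"
    and simple_graph_edge_in_V: "E u v \<Longrightarrow> u \<in> V \<and> v \<in> V"
  using assms unfolding simple_graph_def by blast+

lemma successively_nth:
  assumes "successively P xs" "Suc i < length xs"
  shows "P (xs ! i) (xs ! Suc i)"
  using assms
  by (induction P xs arbitrary: i rule: successively.induct) (auto simp: less_Suc_eq_0_disj)

lemma has_cycle_of_length_successivelyI:
  assumes "distinct xs" "3 \<le> length xs" "set xs \<subseteq> V"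
    and "successively E xs" "E (last xs) (hd xs)"
  shows "has_cycle_of_length V E (length xs)"
  unfolding has_cycle_of_length_def
proof (intro conjI exI[of _ "nth xs"] allI impI)
  fix i assume "i < length xs"
  show "E (xs ! i) (xs ! (Suc i mod length xs))"
  proof (cases "Suc i < length xs")
    case True
    then show ?thesis using successively_nth[OF assms(4)] by simp
  next
    case False
    with \<open>i < length xs\<close> have "length xs = Suc i" by simp
    moreover have "xs \<noteq> []" using \<open>i < length xs\<close> by auto
    ultimately have "xs ! i = last xs" "xs ! (Suc i mod length xs) = hd xs"
      by (simp_all add: last_conv_nth hd_conv_nth)
    then show ?thesis using assms(5) by simp
  qed
qed (use assms in \<open>auto intro: inj_on_nth\<close>)

lemma has_cycle_of_length_3I:
  assumes G: "simple_graph V E" and "E a b" "E b c" "E c a"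
  shows "has_cycle_of_length V E 3"
  using has_cycle_of_length_successivelyI[of "[a, b, c]" V E] assms
    simple_graph_irrefl[OF G] simple_graph_edge_in_V[OF G \<open>E a b\<close>]
    simple_graph_edge_in_V[OF G \<open>E c a\<close>]
  by (auto simp: eval_nat_numeral)

lemma has_cycle_of_length_4I:
  assumes G: "simple_graph V E" and "distinct [a, b, c, d]" "E a b" "E b c" "E c d" "E d a"
  shows "has_cycle_of_length V E 4"
  using has_cycle_of_length_successivelyI[of "[a, b, c, d]" V E] assms
    simple_graph_edge_in_V[OF G \<open>E a b\<close>] simple_graph_edge_in_V[OF G \<open>E c d\<close>]
  by (simp add: eval_nat_numeral)

lemma has_cycle_of_length_6I:
  assumes G: "simple_graph V E" and "distinct [a, b, c, d, e, f]"
    "E a b" "E b c" "E c d" "E d e" "E e f" "E f a"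
  shows "has_cycle_of_length V E 6"
  using has_cycle_of_length_successivelyI[of "[a, b, c, d, e, f]" V E] assms
    simple_graph_edge_in_V[OF G \<open>E a b\<close>] simple_graph_edge_in_V[OF G \<open>E c d\<close>]
    simple_graph_edge_in_V[OF G \<open>E e f\<close>]
  by (simp add: eval_nat_numeral)

lemma common_neighbour_unique:
  assumes G: "simple_graph V E" and no_C4: "\<not> has_cycle_of_length V E 4"
    and "u \<noteq> v" "E u x" "E x v" "E u y" "E y v"
  shows "x = y"
proof (rule ccontr)
  assume "x \<noteq> y"
  then have "distinct [u, x, v, y]"
    using assms simple_graph_irrefl[OF G] by auto
  then show False
    using no_C4 has_cycle_of_length_4I[OF G] assms simple_graph_sym[OF G] by blast
qed

definition neighbourhood :: "'a set \<Rightarrow> ('a \<Rightarrow> 'a \<Rightarrow> bool) \<Rightarrow> 'a \<Rightarrow> 'a set" where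
  "neighbourhood V E x = {y \<in> V. E x y}"

lemma neighbourhood_is_clique_square:
  assumes "simple_graph V E"
  shows "is_clique V (square_adj V E) (neighbourhood V E x)"
  using assms unfolding is_clique_def square_adj_def neighbourhood_def simple_graph_def
  by blast

lemma clique_square_subset_neighbourhood:
  assumes G: "simple_graph V E"
    and no_C3: "\<not> has_cycle_of_length V E 3"
    and no_C4: "\<not> has_cycle_of_length V E 4"
    and no_C6: "\<not> has_cycle_of_length V E 6"
    and K: "is_clique V (square_adj V E) K" and "u \<in> K" "v \<in> K" "u \<noteq> v"
    and ux: "E u x" and xv: "E x v"
  shows "K \<subseteq> neighbourhood V E x"
proof
  note sym = simple_graph_sym[OF G] and irrefl = simple_graph_irrefl[OF G]
  have triangle_free: False if "E p q" "E q r" "E r p" for p q r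
    using no_C3 has_cycle_of_length_3I[OF G that] by blast
  fix w assume "w \<in> K"
  then have "w \<in> V" using K unfolding is_clique_def by blast
  show "w \<in> neighbourhood V E x"
  proof (cases "w = u \<or> w = v")
    case True
    then show ?thesis using ux xv sym \<open>w \<in> V\<close> unfolding neighbourhood_def by auto
  next
    case False
    have path2: "\<exists>a. E p a \<and> E a w" if "p \<in> K" "p \<noteq> w" for p
      using K \<open>w \<in> K\<close> that unfolding is_clique_def square_adj_def by blast
    obtain a where ua: "E u a" and aw: "E a w" using path2 \<open>u \<in> K\<close> False by blast
    obtain b where vb: "E v b" and bw: "E b w" using path2 \<open>v \<in> K\<close> False by blast
    show ?thesis
    proof (rule ccontr)
      assume "w \<notin> neighbourhood V E x"
      then have xw: "\<not> E x w" using \<open>w \<in> V\<close> unfolding neighbourhood_def by blast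
      have "a \<noteq> b"
      proof
        assume "a = b"
        then have "a = x"
          using common_neighbour_unique[OF G no_C4 \<open>u \<noteq> v\<close> ua _ ux xv] vb sym by blast
        then show False using aw xw by blast
      qed
      moreover have "x \<noteq> w" using triangle_free[of u a x] ua aw ux sym by blast
      moreover have "a \<noteq> v" "b \<noteq> u" using triangle_free[of u x v] ux xv ua vb sym by blast+
      ultimately have "distinct [u, x, v, b, w, a]"
        using False \<open>u \<noteq> v\<close> ux xv ua aw vb bw xw irrefl by auto
      then show False
        using no_C6 has_cycle_of_length_6I[OF G _ ux xv vb bw] aw ua sym by blast
    qed
  qed
qed

lemma maximal_clique_square_eq_neighbourhood:
  assumes G: "simple_graph V E"
    and no_C3: "\<not> has_cycle_of_length V E 3"
    and no_C4: "\<not> has_cycle_of_length V E 4"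
    and no_C6: "\<not> has_cycle_of_length V E 6"
    and "is_maximal_clique V (square_adj V E) K" and "u \<in> K" "v \<in> K" "u \<noteq> v"
    and "E u x" "E x v"
  shows "K = neighbourhood V E x"
  using assms(2-) neighbourhood_is_clique_square[OF G]
    clique_square_subset_neighbourhood[OF G no_C3 no_C4 no_C6]
  unfolding is_maximal_clique_def by blast

theorem maximal_cliques_square_inter_card_le_1:
  assumes G: "simple_graph V E"
    and no_C3: "\<not> has_cycle_of_length V E 3"
    and no_C4: "\<not> has_cycle_of_length V E 4"
    and no_C6: "\<not> has_cycle_of_length V E 6"
    and K1: "is_maximal_clique V (square_adj V E) K1"
    and K2: "is_maximal_clique V (square_adj V E) K2" and "K1 \<noteq> K2"
  shows "card (K1 \<inter> K2) \<le> 1"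
proof (rule ccontr)
  assume "\<not> card (K1 \<inter> K2) \<le> 1"
  then obtain u v where uv: "u \<in> K1 \<inter> K2" "v \<in> K1 \<inter> K2" "u \<noteq> v"
    by (metis One_nat_def card.infinite card_le_Suc0_iff_eq zero_le_one)
  then obtain x where "E u x" "E x v"
    using K1 unfolding is_maximal_clique_def is_clique_def square_adj_def by blast
  then have "K1 = neighbourhood V E x" "K2 = neighbourhood V E x"
    using maximal_clique_square_eq_neighbourhood[OF G no_C3 no_C4 no_C6] K1 K2 uv by blast+
  with \<open>K1 \<noteq> K2\<close> show False by simp
qed

theorem lemmaA4:
  fixes c1 c2 :: real
  assumes "0 < c1" and "c1 \<le> c2"
  shows "\<exists>N::nat. \<forall>n\<ge>N. \<forall>t::real. \<forall>(V::nat set) E.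
     1 \<le> t \<and> t \<le> real n powr 0.1 \<and>
     simple_graph V E \<and> card V = n \<and>
     (\<forall>v\<in>V. c1 * t \<le> real (degree V E v) \<and> real (degree V E v) \<le> c2 * t) \<and>
     (\<forall>k\<le>8. \<not> has_cycle_of_length V E k)
     \<longrightarrow> (\<forall>K1 K2. is_maximal_clique V (square_adj V E) K1 \<and>
                  is_maximal_clique V (square_adj V E) K2 \<and> K1 \<noteq> K2
                  \<longrightarrow> card (K1 \<inter> K2) \<le> 1)"
  by (intro exI[of _ 0] allI impI, elim conjE, rule maximal_cliques_square_inter_card_le_1)
    simp_all

end
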